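(* Let $H=\langle a,b \mid c=[b,a],\ [c,a]=[c,b]=1\rangle$. Then $PJ(H)=J_0(H)$.
   Context: $[x,y]=x^{-1}y^{-1}xy$; $H\cong UT(3,\mathbb{Z})$ and each element is uniquely $a^mb^nc^k$, $m,n,k\in\mathbb{Z}$. $PJ(H)$ is the space of functions $f\colon H\to\mathbb{R}$ such that for some $\delta>0$, $|f(xy)+f(xy^{-1})-2f(x)|\le\delta$ for all $x,y\in H$, and $f(x^n)=nf(x)$ for all $x\in H$, $n\in\mathbb{Z}$. $J_0(H)$ is the space of $f\colon H\to\mathbb{R}$ with $f(xy)+f(xy^{-1})=2f(x)$ for all $x,y$ and $f(1)=0$. *)

theory Defs
  imports Complex_Main "HOL-Algebra.Group"
begin

text \<open>Concrete model of H = <a,b | c=[b,a], [c,a]=[c,b]=1>, with [x,y] = x^-1 y^-1 x y.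
  The element a^m b^n c^k is represented by the triple (m,n,k).  Since b a = a b c
  and c is central, (a^m b^n c^k)(a^m' b^n' c^k') = a^(m+m') b^(n+n') c^(k+k'+n m').\<close>

fun heis_mult :: "int \<times> int \<times> int \<Rightarrow> int \<times> int \<times> int \<Rightarrow> int \<times> int \<times> int" where
  "heis_mult (m, n, k) (m', n', k') = (m + m', n + n', k + k' + n * m')"

definition Heis :: "(int \<times> int \<times> int) monoid" where
  "Heis = \<lparr>carrier = UNIV, mult = heis_mult, one = (0, 0, 0)\<rparr>"

definition gen_a :: "int \<times> int \<times> int" where "gen_a = (1, 0, 0)"
definition gen_b :: "int \<times> int \<times> int" where "gen_b = (0, 1, 0)"
definition gen_c :: "int \<times> int \<times> int" where "gen_c = (0, 0, 1)"

lemma group_Heis: "group Heis"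
proof (rule groupI)
  show "\<And>x y z. x \<in> carrier Heis \<Longrightarrow> y \<in> carrier Heis \<Longrightarrow> z \<in> carrier Heis \<Longrightarrow>
      x \<otimes>\<^bsub>Heis\<^esub> y \<otimes>\<^bsub>Heis\<^esub> z = x \<otimes>\<^bsub>Heis\<^esub> (y \<otimes>\<^bsub>Heis\<^esub> z)"
    by (auto simp: Heis_def algebra_simps)
  show "\<And>x. x \<in> carrier Heis \<Longrightarrow> \<exists>y\<in>carrier Heis. y \<otimes>\<^bsub>Heis\<^esub> x = \<one>\<^bsub>Heis\<^esub>"
  proof -
    fix x :: "int \<times> int \<times> int"
    obtain m n k where "x = (m, n, k)" by (cases x) auto
    then show "\<exists>y\<in>carrier Heis. y \<otimes>\<^bsub>Heis\<^esub> x = \<one>\<^bsub>Heis\<^esub>"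
      by (intro bexI[of _ "(-m, -n, -k + n*m)"]) (auto simp: Heis_def)
  qed
qed (auto simp: Heis_def)

lemma "gen_c = inv\<^bsub>Heis\<^esub> gen_b \<otimes>\<^bsub>Heis\<^esub> inv\<^bsub>Heis\<^esub> gen_a \<otimes>\<^bsub>Heis\<^esub> gen_b \<otimes>\<^bsub>Heis\<^esub> gen_a"
proof -
  interpret group Heis by (rule group_Heis)
  have ib: "inv\<^bsub>Heis\<^esub> gen_b = (0, -1, 0)"
    by (rule inv_equality) (auto simp: Heis_def gen_b_def)
  have ia: "inv\<^bsub>Heis\<^esub> gen_a = (-1, 0, 0)"
    by (rule inv_equality) (auto simp: Heis_def gen_a_def)
  show ?thesis by (simp add: ia ib, simp add: Heis_def gen_a_def gen_b_def gen_c_def)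
qed

definition PJ :: "(int \<times> int \<times> int \<Rightarrow> real) set" where
  "PJ = {f. (\<exists>\<delta>>0. \<forall>x y.
              \<bar>f (x \<otimes>\<^bsub>Heis\<^esub> y) + f (x \<otimes>\<^bsub>Heis\<^esub> inv\<^bsub>Heis\<^esub> y) - 2 * f x\<bar> \<le> \<delta>)
           \<and> (\<forall>x (n::int). f (x [^]\<^bsub>Heis\<^esub> n) = real_of_int n * f x)}"

definition J0 :: "(int \<times> int \<times> int \<Rightarrow> real) set" where
  "J0 = {f. (\<forall>x y. f (x \<otimes>\<^bsub>Heis\<^esub> y) + f (x \<otimes>\<^bsub>Heis\<^esub> inv\<^bsub>Heis\<^esub> y) = 2 * f x)
           \<and> f \<one>\<^bsub>Heis\<^esub> = 0}"

end

theory Submission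
  imports Defs
begin

(* A homogeneous function f with bounded Jensen defect satisfies the Jensen equation on
   commuting pairs: for such x, y the defect at (x^N, y^N) is N times the defect at (x, y), and
   bounded multiples of a real number vanish.  As c is central, f is therefore additive along
   the centre: f (z c^e) = f z + e f c.  In H the products x^N y^N and x^N y^-N differ from
   (x y)^N and (x y^-1)^N by central factors c^e and c^-e with opposite exponents, so the
   defect scales by N for arbitrary pairs as well, and f is Jensen everywhere.  Conversely a
   Jensen function vanishing at 1 satisfies f (x^(i+1)) = 2 f (x^i) - f (x^(i-1)) and is
   therefore homogeneous. *)

definition jensen_defect :: "('a, 'b) monoid_scheme \<Rightarrow> ('a \<Rightarrow> real) \<Rightarrow> 'a \<Rightarrow> 'a \<Rightarrow> real" where
  "jensen_defect G f x y = f (x \<otimes>\<^bsub>G\<^esub> y) + f (x \<otimes>\<^bsub>G\<^esub> inv\<^bsub>G\<^esub> y) - 2 * f x"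

definition int_pow_homogeneous :: "('a, 'b) monoid_scheme \<Rightarrow> ('a \<Rightarrow> real) \<Rightarrow> bool" where
  "int_pow_homogeneous G f \<longleftrightarrow> (\<forall>x\<in>carrier G. \<forall>n::int. f (x [^]\<^bsub>G\<^esub> n) = of_int n * f x)"

lemma int_pow_homogeneousD:
  "int_pow_homogeneous G f \<Longrightarrow> x \<in> carrier G \<Longrightarrow> f (x [^]\<^bsub>G\<^esub> n) = of_int n * f x"
  by (simp add: int_pow_homogeneous_def)

lemma bounded_int_multiples_eq_0:
  fixes r \<delta> :: real
  assumes "\<And>n::int. \<bar>of_int n * r\<bar> \<le> \<delta>"
  shows "r = 0"
proof (rule ccontr)
  assume "r \<noteq> 0"
  obtain n :: nat where "real n > \<delta> / \<bar>r\<bar>"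
    using reals_Archimedean2 by blast
  with \<open>r \<noteq> 0\<close> have "\<bar>of_int (int n) * r\<bar> > \<delta>"
    by (simp add: abs_mult field_simps)
  with assms show False by (meson not_le)
qed

context group
begin

lemma commuting_defect_int_pow:
  assumes hom: "int_pow_homogeneous G f"
    and x: "x \<in> carrier G" and y: "y \<in> carrier G" and comm: "x \<otimes> y = y \<otimes> x"
  shows "jensen_defect G f (x [^] n) (y [^] n) = of_int n * jensen_defect G f x y"
proof -
  have "x \<otimes> inv y = inv y \<otimes> x"
    using comm x y by (metis inv_closed inv_solve_left inv_solve_right m_assoc m_closed)
  then have "(x \<otimes> inv y) [^] n = x [^] n \<otimes> inv y [^] n"
    using x y by (intro int_pow_mult_distrib) auto
  then have "x [^] n \<otimes> inv (y [^] n) = (x \<otimes> inv y) [^] n"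
    by (simp add: int_pow_inv y)
  moreover have "x [^] n \<otimes> y [^] n = (x \<otimes> y) [^] n"
    by (rule int_pow_mult_distrib [OF comm x y, symmetric])
  ultimately show ?thesis
    using int_pow_homogeneousD[OF hom] x y by (simp add: jensen_defect_def algebra_simps)
qed

lemma quasi_jensen_commuting_additive:
  assumes hom: "int_pow_homogeneous G f"
    and bounded: "\<And>x y. x \<in> carrier G \<Longrightarrow> y \<in> carrier G \<Longrightarrow> \<bar>jensen_defect G f x y\<bar> \<le> \<delta>"
    and x: "x \<in> carrier G" and y: "y \<in> carrier G" and comm: "x \<otimes> y = y \<otimes> x"
  shows "f (x \<otimes> y) = f x + f y"
proof -
  have jensen: "jensen_defect G f u v = 0"
    if "u \<in> carrier G" "v \<in> carrier G" "u \<otimes> v = v \<otimes> u" for u v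
    by (rule bounded_int_multiples_eq_0[of _ \<delta>])
      (metis that bounded commuting_defect_int_pow[OF hom] int_pow_closed)
  have "f (y \<otimes> inv x) = - f (x \<otimes> inv y)"
    using int_pow_homogeneousD[OF hom, of "x \<otimes> inv y" "-1"] x y
    by (simp add: int_pow_neg inv_mult_group)
  with jensen[OF x y comm] jensen[OF y x comm [symmetric]] comm show ?thesis
    by (simp add: jensen_defect_def)
qed

lemma jensen_imp_int_pow_homogeneous:
  assumes jensen: "\<And>x y. x \<in> carrier G \<Longrightarrow> y \<in> carrier G \<Longrightarrow> jensen_defect G f x y = 0"
    and one: "f \<one> = 0"
  shows "int_pow_homogeneous G f"
  unfolding int_pow_homogeneous_def
proof (intro ballI allI)
  fix x and n :: int
  assume x: "x \<in> carrier G"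
  have odd: "f (inv z) = - f z" if "z \<in> carrier G" for z
    using jensen[of \<one> z] one that by (simp add: jensen_defect_def)
  have recurrence: "f (x [^] (i + 1)) = 2 * f (x [^] i) - f (x [^] (i - 1))" for i :: int
    using jensen[of "x [^] i" x] x
    by (simp add: jensen_defect_def int_pow_mult int_pow_diff)
  have nat_pow: "f (x [^] int j) = real j * f x \<and> f (x [^] (int j + 1)) = (real j + 1) * f x" for j
  proof (induction j)
    case 0
    then show ?case using one x by simp
  next
    case (Suc j)
    then show ?case using recurrence[of "int j + 1"] by (simp add: algebra_simps)
  qed
  show "f (x [^] n) = of_int n * f x"
  proof (cases n rule: int_cases)
    case (nonneg j)
    then show ?thesis using nat_pow[of j] by simp
  next
    case (neg j)
    then have "f (x [^] n) = - f (x [^] int (Suc j))"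
      using int_pow_neg[OF x] odd[of "x [^] int (Suc j)"] x by (metis int_pow_closed)
    also have "\<dots> = of_int n * f x"
      unfolding neg using nat_pow[of "Suc j"] by (simp add: algebra_simps)
    finally show ?thesis .
  qed
qed

end

lemma carrier_Heis [simp]: "carrier Heis = UNIV"
  by (simp add: Heis_def)

lemma Heis_mult: "x \<otimes>\<^bsub>Heis\<^esub> y = heis_mult x y"
  by (simp add: Heis_def)

lemma Heis_inv: "inv\<^bsub>Heis\<^esub> (m, n, k) = (- m, - n, n * m - k)"
proof -
  interpret group Heis by (rule group_Heis)
  show ?thesis by (rule inv_equality) (auto simp: Heis_def)
qed

lemma triangular_Suc: "(i + 1) * i div 2 = i * (i - 1) div 2 + (i::int)"
proof -
  have "(i + 1) * i = i * (i - 1) + 2 * i" by (simp add: algebra_simps)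
  then show ?thesis by simp
qed

lemma Heis_int_pow:
  "(m, n, k) [^]\<^bsub>Heis\<^esub> N = (N * m, N * n, N * k + m * n * (N * (N - 1) div 2))"
proof -
  interpret group Heis by (rule group_Heis)
  have nat_pow: "(m, n, k) [^]\<^bsub>Heis\<^esub> j =
      (int j * m, int j * n, int j * k + m * n * (int j * (int j - 1) div 2))" for j :: nat
  proof (induction j)
    case (Suc j)
    then show ?case using triangular_Suc[of "int j"] by (simp add: Heis_mult algebra_simps)
  qed (simp add: Heis_def)
  show ?thesis
  proof (cases N rule: int_cases)
    case (nonneg j)
    then show ?thesis by (simp add: int_pow_int nat_pow)
  next
    case (neg j)
    define M where "M = int (Suc j)"
    define T where "T = M * (M - 1) div 2"
    have "(m, n, k) [^]\<^bsub>Heis\<^esub> N = inv\<^bsub>Heis\<^esub> ((m, n, k) [^]\<^bsub>Heis\<^esub> Suc j)"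
      using neg int_pow_neg_int[of "(m, n, k)" "Suc j"] by (simp add: Heis_def)
    also have "\<dots> = (- M * m, - M * n, M * n * (M * m) - (M * k + m * n * T))"
      unfolding nat_pow M_def [symmetric] T_def [symmetric] by (simp add: Heis_inv)
    also have "\<dots> = (N * m, N * n, N * k + m * n * (N * (N - 1) div 2))"
    proof -
      have N: "N = - M"
        by (simp add: neg M_def)
      have triangular_N: "- M * (- M - 1) div 2 = T + M"
        using triangular_Suc[of M] by (simp add: T_def algebra_simps)
      have square: "M * M = 2 * T + M"
        using triangular_Suc[of "M - 1"] by (simp add: T_def algebra_simps)
      show ?thesis
        unfolding N triangular_N by simp (use square in algebra)
    qed
    finally show ?thesis .
  qed
qed

lemma gen_c_int_pow: "gen_c [^]\<^bsub>Heis\<^esub> e = (0, 0, e)"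
  by (simp add: gen_c_def Heis_int_pow)

lemma Heis_int_pow_mult_int_pow:
  "(m, n, k) [^]\<^bsub>Heis\<^esub> N \<otimes>\<^bsub>Heis\<^esub> (p, q, r) [^]\<^bsub>Heis\<^esub> N =
    ((m, n, k) \<otimes>\<^bsub>Heis\<^esub> (p, q, r)) [^]\<^bsub>Heis\<^esub> N \<otimes>\<^bsub>Heis\<^esub>
      gen_c [^]\<^bsub>Heis\<^esub> ((N * (N - 1) div 2) * (n * p - m * q))"
proof -
  define T where "T = N * (N - 1) div 2"
  have square: "N * N = 2 * T + N"
    using triangular_Suc[of "N - 1"] by (simp add: T_def algebra_simps)
  show ?thesis
    by (simp add: Heis_mult Heis_int_pow gen_c_int_pow flip: T_def) (use square in algebra)
qed

lemma Heis_central_shift: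
  assumes hom: "int_pow_homogeneous Heis f"
    and bounded: "\<And>x y. \<bar>jensen_defect Heis f x y\<bar> \<le> \<delta>"
  shows "f (z \<otimes>\<^bsub>Heis\<^esub> gen_c [^]\<^bsub>Heis\<^esub> e) = f z + of_int e * f gen_c"
proof -
  interpret group Heis by (rule group_Heis)
  have "z \<otimes>\<^bsub>Heis\<^esub> gen_c [^]\<^bsub>Heis\<^esub> e = gen_c [^]\<^bsub>Heis\<^esub> e \<otimes>\<^bsub>Heis\<^esub> z"
    by (cases z) (simp add: Heis_mult gen_c_int_pow)
  then have "f (z \<otimes>\<^bsub>Heis\<^esub> gen_c [^]\<^bsub>Heis\<^esub> e) = f z + f (gen_c [^]\<^bsub>Heis\<^esub> e)"
    using quasi_jensen_commuting_additive[OF hom bounded] by simp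
  with int_pow_homogeneousD[OF hom] show ?thesis
    by simp
qed

lemma Heis_defect_int_pow:
  assumes hom: "int_pow_homogeneous Heis f"
    and bounded: "\<And>x y. \<bar>jensen_defect Heis f x y\<bar> \<le> \<delta>"
  shows "jensen_defect Heis f (x [^]\<^bsub>Heis\<^esub> N) (y [^]\<^bsub>Heis\<^esub> N) =
    of_int N * jensen_defect Heis f x y"
proof -
  interpret group Heis by (rule group_Heis)
  obtain m n k p q r where x: "x = (m, n, k)" and y: "y = (p, q, r)"
    by (cases x, cases y) blast
  define e where "e = (N * (N - 1) div 2) * (n * p - m * q)"
  have "x [^]\<^bsub>Heis\<^esub> N \<otimes>\<^bsub>Heis\<^esub> y [^]\<^bsub>Heis\<^esub> N =
      (x \<otimes>\<^bsub>Heis\<^esub> y) [^]\<^bsub>Heis\<^esub> N \<otimes>\<^bsub>Heis\<^esub> gen_c [^]\<^bsub>Heis\<^esub> e"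
    unfolding x y e_def by (rule Heis_int_pow_mult_int_pow)
  moreover have "x [^]\<^bsub>Heis\<^esub> N \<otimes>\<^bsub>Heis\<^esub> inv\<^bsub>Heis\<^esub> (y [^]\<^bsub>Heis\<^esub> N) =
      (x \<otimes>\<^bsub>Heis\<^esub> inv\<^bsub>Heis\<^esub> y) [^]\<^bsub>Heis\<^esub> N \<otimes>\<^bsub>Heis\<^esub> gen_c [^]\<^bsub>Heis\<^esub> (- e)"
    using Heis_int_pow_mult_int_pow[of m n k N "- p" "- q" "q * p - r"]
    by (simp add: x y e_def Heis_inv int_pow_inv [symmetric] algebra_simps)
  ultimately show ?thesis
    using int_pow_homogeneousD[OF hom] Heis_central_shift[OF hom bounded]
    by (simp add: jensen_defect_def algebra_simps)
qed

theorem lemma3p10: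
  shows "PJ = J0"
proof
  show "PJ \<subseteq> J0"
  proof
    fix f assume "f \<in> PJ"
    then obtain \<delta> where bounded: "\<And>x y. \<bar>jensen_defect Heis f x y\<bar> \<le> \<delta>"
      and hom: "int_pow_homogeneous Heis f"
      unfolding PJ_def jensen_defect_def int_pow_homogeneous_def carrier_Heis by blast
    have "jensen_defect Heis f x y = 0" for x y
      by (rule bounded_int_multiples_eq_0[of _ \<delta>])
        (metis bounded Heis_defect_int_pow[OF hom bounded])
    moreover have "f \<one>\<^bsub>Heis\<^esub> = 0"
      using int_pow_homogeneousD[OF hom, of "\<one>\<^bsub>Heis\<^esub>" 0] by simp
    ultimately show "f \<in> J0"
      by (simp add: J0_def jensen_defect_def)
  qed
next
  show "J0 \<subseteq> PJ"
  proof
    fix f assume "f \<in> J0"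
    then have jensen: "jensen_defect Heis f x y = 0" and "f \<one>\<^bsub>Heis\<^esub> = 0" for x y
      by (simp_all add: J0_def jensen_defect_def del: split_paired_All)
    then have "int_pow_homogeneous Heis f"
      by (intro group.jensen_imp_int_pow_homogeneous[OF group_Heis])
    moreover have "\<bar>jensen_defect Heis f x y\<bar> \<le> 1" for x y
      using jensen by simp
    ultimately show "f \<in> PJ"
      unfolding PJ_def jensen_defect_def int_pow_homogeneous_def carrier_Heis
      using zero_less_one by blast
  qed
qed

end
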